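(* Let $(\Omega,\mathcal F,\mathbb P)$ be a probability space, $M$ a one-dimensional compact manifold (interval or circle), $I\subset(-1,1)$ an open interval containing $0$, and for $\omega\in\Omega$, $\epsilon\in I$ let $T_{\omega,\epsilon}\colon M\to M$ be $C^2$ (on their branches) with $|T'_{\omega,\epsilon}|\ge\gamma_\omega>0$; write $T_\omega=T_{\omega,0}$. Let $\mathcal L_{\omega,\epsilon}g(x)=\sum_{T_{\omega,\epsilon}y=x}g(y)/|T'_{\omega,\epsilon}(y)|$, $\mathcal L_\omega=\mathcal L_{\omega,0}$, and let $E(\omega)$ be a random variable with $\|\mathcal L_{\omega,\epsilon}\mathbf 1\|_\infty\le E(\omega)$ for all $\epsilon\in I$. Assume there is a random variable $q(\omega)$ with $d_{C^1}(T_{\omega,\epsilon},T_\omega)\le q(\omega)|\epsilon|$, and that for every $x\in M$ the preimages $y_{i,\omega}(x)$ of $x$ under $T_\omega$ and $y_{\epsilon,i,\omega}(x)$ under $T_{\omega,\epsilon}$ can be paired (indexed by the same $i$) so that $\|y_{\epsilon,i,\omega}-y_{i,\omega}\|_\infty\le q(\omega)|\epsilon|$ for all $i$. Then for $\mathbb P$-a.e. $\omega$, every $g\in C^1(M)$ and every $\epsilon\in I$, $$\|(\mathcal L_{\omega,\epsilon}-\mathcal L_\omega)g\|_\infty\le|\epsilon|\,\bar q(\omega)\|g\|_{C^1},\qquad \bar q(\omega):=E(\omega)q(\omega)\big(1+\gamma_\omega^{-1}+\gamma_\omega^{-1}\|T''_\omega\|_\infty\big).$$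
   Context: $d_{C^1}$ denotes the $C^1$ distance between maps. *)

theory Defs
  imports "HOL-Probability.Probability"
begin

text \<open>The one-dimensional compact manifold M: either the interval [a,b]
  (circ = False) or the circle R/Z, represented by the fundamental domain [0,1)
  (circ = True, and then a = 0, b = 1).\<close>

definition Mset :: "bool \<Rightarrow> real \<Rightarrow> real \<Rightarrow> real set" where
  "Mset circ a b = (if circ then {0..<1} else {a..b})"

definition projM :: "bool \<Rightarrow> real \<Rightarrow> real" where
  "projM circ t = (if circ then frac t else t)"

definition distM :: "bool \<Rightarrow> real \<Rightarrow> real \<Rightarrow> real" where
  "distM circ u v = (if circ then min (frac (u - v)) (1 - frac (u - v)) else \<bar>u - v\<bar>)"

definition supM :: "real set \<Rightarrow> (real \<Rightarrow> real) \<Rightarrow> real" where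
  "supM M f = (SUP x\<in>M. \<bar>f x\<bar>)"

definition C1_fun :: "bool \<Rightarrow> real \<Rightarrow> real \<Rightarrow> (real \<Rightarrow> real) \<Rightarrow> (real \<Rightarrow> real) \<Rightarrow> bool" where
  "C1_fun circ a b g g' \<longleftrightarrow>
     (if circ then (\<forall>x. g (x + 1) = g x) \<and> (\<forall>x. (g has_real_derivative g' x) (at x))
                   \<and> continuous_on UNIV g'
      else (\<forall>x\<in>{a..b}. (g has_real_derivative g' x) (at x within {a..b}))
                   \<and> continuous_on {a..b} g')"

definition C1_norm :: "real set \<Rightarrow> (real \<Rightarrow> real) \<Rightarrow> (real \<Rightarrow> real) \<Rightarrow> real" where
  "C1_norm M g g' = supM M g + supM M g'"

text \<open>Branch partition a = c 0 < c 1 < ... < c N = b; branch k is [c k, c (k+1))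
  (the last branch also contains b in the interval case).\<close>
definition partition_of :: "nat \<Rightarrow> (nat \<Rightarrow> real) \<Rightarrow> real \<Rightarrow> real \<Rightarrow> bool" where
  "partition_of N c a b \<longleftrightarrow> N \<ge> 1 \<and> c 0 = a \<and> c N = b \<and> (\<forall>k<N. c k < c (Suc k))"

definition bidx :: "nat \<Rightarrow> (nat \<Rightarrow> real) \<Rightarrow> real \<Rightarrow> nat" where
  "bidx N c y = (if \<exists>k<N. c k \<le> y \<and> y < c (Suc k)
                 then (THE k. k < N \<and> c k \<le> y \<and> y < c (Suc k)) else N - 1)"

definition glue :: "nat \<Rightarrow> (nat \<Rightarrow> real) \<Rightarrow> (nat \<Rightarrow> real \<Rightarrow> real) \<Rightarrow> real \<Rightarrow> real" where
  "glue N c F y = F (bidx N c y) y"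

definition branches_C2 :: "nat \<Rightarrow> (nat \<Rightarrow> real) \<Rightarrow> (nat \<Rightarrow> real \<Rightarrow> real)
    \<Rightarrow> (nat \<Rightarrow> real \<Rightarrow> real) \<Rightarrow> (nat \<Rightarrow> real \<Rightarrow> real) \<Rightarrow> bool" where
  "branches_C2 N c F F' F'' \<longleftrightarrow>
     (\<forall>k<N. (\<forall>y\<in>{c k..c (Suc k)}.
                (F k has_real_derivative F' k y) (at y within {c k..c (Suc k)}) \<and>
                (F' k has_real_derivative F'' k y) (at y within {c k..c (Suc k)}))
            \<and> continuous_on {c k..c (Suc k)} (F'' k))"

definition transfer_op :: "real set \<Rightarrow> (real \<Rightarrow> real) \<Rightarrow> (real \<Rightarrow> real) \<Rightarrow> (real \<Rightarrow> real) \<Rightarrow> real \<Rightarrow> real" where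
  "transfer_op M T T' g x = (\<Sum>y\<in>{y\<in>M. T y = x}. g y / \<bar>T' y\<bar>)"

definition dC1 :: "bool \<Rightarrow> real set \<Rightarrow> (real \<Rightarrow> real) \<Rightarrow> (real \<Rightarrow> real)
    \<Rightarrow> (real \<Rightarrow> real) \<Rightarrow> (real \<Rightarrow> real) \<Rightarrow> real" where
  "dC1 circ M S S' T T' = (SUP y\<in>M. distM circ (S y) (T y)) + (SUP y\<in>M. \<bar>S' y - T' y\<bar>)"

end

theory Submission
  imports Defs
begin

(* Fix \<omega>: the estimate is deterministic and holds for every \<omega>.  Write T, T\<^sub>\<epsilon> for
   T\<^sub>\<omega>, T\<^sub>\<omega>\<^sub>\<epsilon> and \<delta> = q \<omega> |\<epsilon>|.  Pair each T-preimage y of x with the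
   T\<^sub>\<epsilon>-preimage z = \<sigma> y on the same branch, |z - y| \<le> \<delta>.  Then |g z - g y| \<le> |g'|\<^sub>\<infinity> \<delta>,
   and since T' is |T''|\<^sub>\<infinity>-Lipschitz on a single branch,
   |T'\<^sub>\<epsilon> z - T' y| \<le> |T'\<^sub>\<epsilon> z - T' z| + |T''|\<^sub>\<infinity> |z - y| \<le> (1 + |T''|\<^sub>\<infinity>) \<delta>.
   Hence the paired terms of the two transfer operators differ by at most
   \<delta> (|g'|\<^sub>\<infinity> + |g|\<^sub>\<infinity> (1 + |T''|\<^sub>\<infinity>) / \<gamma>) / |T'\<^sub>\<epsilon> z|, and the weights 1 / |T'\<^sub>\<epsilon> z|
   sum to (L\<^sub>\<epsilon> 1)(x) \<le> E.  The hypotheses bound sup norms, which yield pointwise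
   bounds only for bounded functions; this is why the fibres of the branch maps are
   shown to have uniformly bounded cardinality. *)

section \<open>Branch partitions\<close>

lemma partition_of_less:
  assumes "partition_of N c a b" "i < j" "j \<le> N"
  shows "c i < c j"
  using assms(2,3)
proof (induction j)
  case 0
  then show ?case by simp
next
  case (Suc j)
  then have "c j < c (Suc j)" using assms(1) by (simp add: partition_of_def)
  moreover have "i = j \<or> c i < c j" using Suc by (metis Suc_leD less_SucE)
  ultimately show ?case by auto
qed

lemma partition_of_le:
  assumes "partition_of N c a b" "i \<le> j" "j \<le> N"
  shows "c i \<le> c j"
  using partition_of_less[OF assms(1)] assms(2,3) by (cases "i = j") (auto simp: less_imp_le)

lemma partition_of_branch_exists:
  assumes p: "partition_of N c a b" and y: "a \<le> y" "y < b"
  shows "\<exists>k<N. c k \<le> y \<and> y < c (Suc k)"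
proof -
  have "\<exists>k<n. c k \<le> y \<and> y < c (Suc k)" if "n \<le> N" "y < c n" for n
    using that
  proof (induction n)
    case 0
    then show ?case using p y by (simp add: partition_of_def)
  next
    case (Suc n)
    show ?case
    proof (cases "y < c n")
      case True
      then show ?thesis using Suc by (meson Suc_leD less_SucI)
    next
      case False
      then show ?thesis using Suc.prems by (intro exI[of _ n]) auto
    qed
  qed
  then show ?thesis using p y by (auto simp: partition_of_def)
qed

lemma bidx_eqI:
  assumes p: "partition_of N c a b" and k: "k < N" "c k \<le> y" "y < c (Suc k)"
  shows "bidx N c y = k"
proof -
  have uniq: "k' = k" if "k' < N" "c k' \<le> y" "y < c (Suc k')" for k'
  proof (rule ccontr)
    assume "k' \<noteq> k"
    then consider "k' < k" | "k < k'" by linarith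
    then show False
    proof cases
      case 1
      then show False using partition_of_le[OF p, of "Suc k'" k] that k by linarith
    next
      case 2
      then show False using partition_of_le[OF p, of "Suc k" k'] that k by linarith
    qed
  qed
  have "(THE k. k < N \<and> c k \<le> y \<and> y < c (Suc k)) = k"
    using k uniq by (intro the_equality) blast+
  then show ?thesis unfolding bidx_def using k by auto
qed

lemma bidx_bounds:
  assumes p: "partition_of N c a b" and y: "a \<le> y" "y \<le> b"
  shows "bidx N c y < N" "c (bidx N c y) \<le> y" "y \<le> c (Suc (bidx N c y))"
proof -
  have N: "1 \<le> N" "c N = b" using p by (auto simp: partition_of_def)
  have "bidx N c y < N \<and> c (bidx N c y) \<le> y \<and> y \<le> c (Suc (bidx N c y))"
  proof (cases "y < b")
    case True
    then obtain k where "k < N" "c k \<le> y" "y < c (Suc k)"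
      using partition_of_branch_exists[OF p y(1)] by blast
    then show ?thesis using bidx_eqI[OF p] by simp
  next
    case False
    have "c (Suc k) \<le> y" if "k < N" for k
      using partition_of_le[OF p, of "Suc k" N] that N False by simp
    then have "\<not> (\<exists>k<N. c k \<le> y \<and> y < c (Suc k))" by (meson not_less)
    then have "bidx N c y = N - 1" unfolding bidx_def by (rule if_not_P)
    then show ?thesis using partition_of_le[OF p, of "N - 1" N] N y False by simp
  qed
  then show "bidx N c y < N" "c (bidx N c y) \<le> y" "y \<le> c (Suc (bidx N c y))" by auto
qed

lemma bidx_closed_segment:
  assumes p: "partition_of N c a b" and yz: "y \<in> {a..b}" "z \<in> {a..b}"
    and same: "bidx N c z = bidx N c y" and t: "t \<in> closed_segment y z"
  shows "bidx N c t = bidx N c y"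
proof -
  define k where "k = bidx N c y"
  have t': "min y z \<le> t" "t \<le> max y z"
    using t by (auto simp: closed_segment_eq_real_ivl split: if_splits)
  have kN: "k < N" using bidx_bounds(1)[OF p] yz unfolding k_def by simp
  have hy: "c k \<le> y" "y \<le> c (Suc k)" and hz: "c k \<le> z" "z \<le> c (Suc k)"
    using bidx_bounds[OF p] yz same unfolding k_def by (metis atLeastAtMost_iff)+
  have "c k \<le> t" "t \<le> c (Suc k)"
    using hy hz t' by (auto simp: min_def max_def split: if_splits)
  show ?thesis
  proof (cases "t < c (Suc k)")
    case True
    then show ?thesis using bidx_eqI[OF p kN \<open>c k \<le> t\<close>] k_def by simp
  next
    case False
    \<comment> \<open>then t is the right end of the branch, hence the larger of y and z\<close>
    then have "t = max y z"
      using hy hz t' \<open>t \<le> c (Suc k)\<close> by (auto simp: max_def split: if_splits)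
    then show ?thesis using same by (auto simp: max_def)
  qed
qed

lemma abs_le_supM:
  assumes "bounded (f ` M)" "x \<in> M"
  shows "\<bar>f x\<bar> \<le> supM M f"
proof -
  have "bdd_above ((\<lambda>x. \<bar>f x\<bar>) ` M)"
    using assms(1) by (auto simp: bounded_iff intro: bdd_aboveI2)
  then show ?thesis unfolding supM_def using assms(2) by (rule cSUP_upper2) simp
qed

lemma supM_nonneg:
  assumes "bounded (f ` M)" "M \<noteq> {}"
  shows "0 \<le> supM M f"
  using abs_le_supM[OF assms(1)] assms(2) by (meson abs_ge_zero ex_in_conv order_trans)

lemma supM_le:
  assumes "M \<noteq> {}" "\<And>x. x \<in> M \<Longrightarrow> \<bar>f x\<bar> \<le> B"
  shows "supM M f \<le> B"
  unfolding supM_def using assms by (intro cSUP_least) auto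

lemma dC1_deriv_diff_le:
  assumes "bounded (S' ` M)" "bounded (T' ` M)" "S ` M \<subseteq> {a..b}" "T ` M \<subseteq> {a..b}" "z \<in> M"
  shows "\<bar>S' z - T' z\<bar> \<le> dC1 circ M S S' T T'"
proof -
  have "distM circ u v \<le> 1 + (b - a)" if "u \<in> {a..b}" "v \<in> {a..b}" for u v
    using that frac_lt_1[of "u - v"] frac_ge_0[of "u - v"] unfolding distM_def by auto
  then have "bdd_above ((\<lambda>y. distM circ (S y) (T y)) ` M)"
    using assms(3,4) by (intro bdd_aboveI[of _ "1 + (b - a)"]) (auto simp: image_subset_iff)
  moreover have "0 \<le> distM circ (S z) (T z)"
    using frac_lt_1[of "S z - T z"] frac_ge_0[of "S z - T z"] unfolding distM_def by auto
  ultimately have "0 \<le> (SUP y\<in>M. distM circ (S y) (T y))"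
    using assms(5) by (meson cSUP_upper2)
  moreover have "bounded ((\<lambda>y. S' y - T' y) ` M)"
    using bounded_minus_comp[OF assms(1,2)] .
  then have "\<bar>S' z - T' z\<bar> \<le> (SUP y\<in>M. \<bar>S' y - T' y\<bar>)"
    using abs_le_supM[of "\<lambda>y. S' y - T' y", OF _ assms(5)] unfolding supM_def by simp
  ultimately show ?thesis unfolding dC1_def by linarith
qed

lemma C1_fun_deriv_on_interval:
  assumes "C1_fun circ a b g g'"
  shows "\<And>x. x \<in> {a..b} \<Longrightarrow> (g has_real_derivative g' x) (at x within {a..b})"
    and "continuous_on {a..b} g'"
  using assms unfolding C1_fun_def
  by (auto intro: has_field_derivative_at_within continuous_on_subset split: if_splits)

lemma C1_fun_bounded:
  assumes "C1_fun circ a b g g'" "M \<subseteq> {a..b}"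
  shows "bounded (g ` M)" "bounded (g' ` M)"
proof -
  note der = C1_fun_deriv_on_interval[OF assms(1)]
  have "continuous_on {a..b} g" using der(1) by (rule DERIV_continuous_on)
  then show "bounded (g ` M)" using assms(2)
    by (meson bounded_subset compact_Icc compact_continuous_image compact_imp_bounded image_mono)
  show "bounded (g' ` M)" using der(2) assms(2)
    by (meson bounded_subset compact_Icc compact_continuous_image compact_imp_bounded image_mono)
qed

lemma C1_fun_lipschitz:
  assumes "C1_fun circ a b g g'" "M \<subseteq> {a..b}" "convex M" "u \<in> M" "v \<in> M"
  shows "\<bar>g u - g v\<bar> \<le> supM M g' * \<bar>u - v\<bar>"
proof -
  have "norm (g u - g v) \<le> supM M g' * norm (u - v)"
  proof (rule field_differentiable_bound[OF assms(3) _ _ assms(4,5)])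
    fix z assume "z \<in> M"
    then show "(g has_field_derivative g' z) (at z within M)"
      using C1_fun_deriv_on_interval(1)[OF assms(1)] assms(2) by (blast intro: DERIV_subset)
    show "norm (g' z) \<le> supM M g'"
      using abs_le_supM[OF C1_fun_bounded(2)[OF assms(1,2)] \<open>z \<in> M\<close>] by simp
  qed
  then show ?thesis by simp
qed

section \<open>Glued branch maps\<close>

lemma branches_C2_continuous:
  assumes "branches_C2 N c F F' F''" "k < N"
  shows "continuous_on {c k..c (Suc k)} (F k)" "continuous_on {c k..c (Suc k)} (F' k)"
    "continuous_on {c k..c (Suc k)} (F'' k)"
  using assms unfolding branches_C2_def by (blast intro: DERIV_continuous_on)+

lemma glue_bounded:
  assumes p: "partition_of N c a b" and M: "M \<subseteq> {a..b}"
    and cont: "\<And>k. k < N \<Longrightarrow> continuous_on {c k..c (Suc k)} (F k)"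
  shows "bounded (glue N c F ` M)"
proof (rule bounded_subset)
  show "bounded (\<Union>k<N. F k ` {c k..c (Suc k)})"
    using cont by (intro bounded_UN) (auto intro!: compact_imp_bounded compact_continuous_image)
  show "glue N c F ` M \<subseteq> (\<Union>k<N. F k ` {c k..c (Suc k)})"
  proof
    fix u assume "u \<in> glue N c F ` M"
    then obtain y where "y \<in> M" "u = F (bidx N c y) y" unfolding glue_def by blast
    moreover have "a \<le> y" "y \<le> b" using M \<open>y \<in> M\<close> by auto
    then have "bidx N c y < N" "y \<in> {c (bidx N c y)..c (Suc (bidx N c y))}"
      using bidx_bounds[OF p] by auto
    ultimately show "u \<in> (\<Union>k<N. F k ` {c k..c (Suc k)})" by blast
  qed
qed

lemma glue_deriv_lipschitz_on_branch:
  assumes p: "partition_of N c a b" and M: "M \<subseteq> {a..b}" "convex M"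
    and C2: "branches_C2 N c F F' F''"
    and yz: "y \<in> M" "z \<in> M" "bidx N c z = bidx N c y"
  shows "\<bar>glue N c F' y - glue N c F' z\<bar> \<le> supM M (glue N c F'') * \<bar>y - z\<bar>"
proof -
  have bnd: "bounded (glue N c F'' ` M)"
    using glue_bounded[OF p M(1)] branches_C2_continuous(3)[OF C2] by blast
  have der: "(F' k has_real_derivative F'' k t) (at t within {c k..c (Suc k)})"
    if "k < N" "t \<in> {c k..c (Suc k)}" for k t
    using C2 that unfolding branches_C2_def by blast
  define k where "k = bidx N c y"
  define S where "S = closed_segment z y"
  have S: "t \<in> M" "bidx N c t = k" "k < N" "t \<in> {c k..c (Suc k)}" if "t \<in> S" for t
  proof -
    show "t \<in> M" using that yz M(2) unfolding S_def by (meson convex_contains_segment subsetD)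
    then have "a \<le> t" "t \<le> b" using M(1) by auto
    moreover show "bidx N c t = k"
      using bidx_closed_segment[OF p _ _ _ that[unfolded S_def]] yz M(1) unfolding k_def
      by (metis closed_segment_commute subsetD)
    ultimately show "k < N" "t \<in> {c k..c (Suc k)}" using bidx_bounds[OF p] by auto
  qed
  have "norm (F' k y - F' k z) \<le> supM M (glue N c F'') * norm (y - z)"
  proof (rule field_differentiable_bound[of S])
    fix t assume "t \<in> S"
    then show "(F' k has_field_derivative F'' k t) (at t within S)"
      using S der by (meson DERIV_subset subsetI)
    show "norm (F'' k t) \<le> supM M (glue N c F'')"
      using abs_le_supM[OF bnd] S \<open>t \<in> S\<close> unfolding glue_def by fastforce
  qed (auto simp: S_def)
  moreover have "glue N c F' y = F' k y" "glue N c F' z = F' k z"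
    unfolding glue_def k_def yz(3) by simp_all
  ultimately show ?thesis by simp
qed

lemma inj_on_interval_deriv_nonzero:
  fixes F F' :: "real \<Rightarrow> real"
  assumes der: "\<And>y. y \<in> {l..r} \<Longrightarrow> (F has_real_derivative F' y) (at y within {l..r})"
    and nz: "\<And>y. l < y \<Longrightarrow> y < r \<Longrightarrow> F' y \<noteq> 0"
  shows "inj_on F {l..r}"
proof (rule linorder_inj_onI')
  fix u v assume uv: "u \<in> {l..r}" "v \<in> {l..r}" "u < v"
  have "(F has_derivative (\<lambda>h. F' x * h)) (at x within {u..v})" if "u \<le> x" "x \<le> v" for x
  proof -
    have "(F has_real_derivative F' x) (at x within {l..r})" using der uv that by simp
    then have "(F has_real_derivative F' x) (at x within {u..v})"
      by (rule DERIV_subset) (use uv in auto)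
    then show ?thesis by (rule has_field_derivative_imp_has_derivative)
  qed
  then obtain x where x: "u < x" "x < v" "F v - F u = F' x * (v - u)"
    using mvt_simple[OF \<open>u < v\<close>, of F "\<lambda>x h. F' x * h"] by auto
  have "F' x * (v - u) \<noteq> 0" using nz x uv by simp
  then show "F u \<noteq> F v" using x(3) by linarith
qed

lemma branches_C2_inj_on:
  assumes p: "partition_of N c a b" and M: "{a..<b} \<subseteq> M"
    and C2: "branches_C2 N c F F' F''" and nz: "\<forall>y\<in>M. glue N c F' y \<noteq> 0" and k: "k < N"
  shows "inj_on (F k) {c k..c (Suc k)}"
proof (rule inj_on_interval_deriv_nonzero)
  show "(F k has_real_derivative F' k y) (at y within {c k..c (Suc k)})"
    if "y \<in> {c k..c (Suc k)}" for y
    using C2 k that unfolding branches_C2_def by blast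
  fix y assume y: "c k < y" "y < c (Suc k)"
  have "a \<le> c k" "c (Suc k) \<le> b"
    using partition_of_le[OF p, of 0 k] partition_of_le[OF p, of "Suc k" N] p k
    by (auto simp: partition_of_def)
  then have "y \<in> M" using M y by auto
  moreover have "bidx N c y = k" using bidx_eqI[OF p k] y by simp
  ultimately show "F' k y \<noteq> 0" using nz unfolding glue_def by force
qed

text \<open>A fibre of the projected glued map injects into the finite set of pairs
  (branch index, integer part of the lifted value): the branches are injective, and
  the integer part recovers the lift from its projection to the circle.\<close>

lemma glue_fibres_finite_card_le:
  assumes p: "partition_of N c a b" and M: "M \<subseteq> {a..b}"
    and cont: "\<And>k. k < N \<Longrightarrow> continuous_on {c k..c (Suc k)} (F k)"
    and inj: "\<And>k. k < N \<Longrightarrow> inj_on (F k) {c k..c (Suc k)}"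
  shows "\<exists>B. \<forall>x. finite {y\<in>M. projM circ (glue N c F y) = x}
           \<and> card {y\<in>M. projM circ (glue N c F y) = x} \<le> B"
proof -
  obtain R where R: "\<And>y. y \<in> M \<Longrightarrow> \<bar>glue N c F y\<bar> \<le> R"
    using glue_bounded[OF p M cont] by (auto simp: bounded_iff)
  define Z where "Z = {..<N} \<times> {- \<lceil>R\<rceil> - 1 .. \<lceil>R\<rceil> + 1}"
  define h where "h y = (bidx N c y, \<lfloor>glue N c F y\<rfloor>)" for y
  have "finite A \<and> card A \<le> card Z" if A: "A = {y\<in>M. projM circ (glue N c F y) = x}" for A x
  proof -
    have inj_h: "inj_on h A"
    proof (rule inj_onI)
      fix y1 y2 assume y: "y1 \<in> A" "y2 \<in> A" and "h y1 = h y2"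
      then have k: "bidx N c y2 = bidx N c y1" and fl: "\<lfloor>glue N c F y1\<rfloor> = \<lfloor>glue N c F y2\<rfloor>"
        unfolding h_def by simp_all
      have "glue N c F y1 = glue N c F y2"
        using y fl unfolding A projM_def frac_def by (cases circ) auto
      then have eq: "F (bidx N c y1) y1 = F (bidx N c y1) y2" unfolding glue_def k .
      have "a \<le> y1" "y1 \<le> b" "a \<le> y2" "y2 \<le> b" using y A M by auto
      then have "bidx N c y1 < N" "y1 \<in> {c (bidx N c y1)..c (Suc (bidx N c y1))}"
        "y2 \<in> {c (bidx N c y1)..c (Suc (bidx N c y1))}"
        using bidx_bounds[OF p] k by (metis atLeastAtMost_iff)+
      then show "y1 = y2" using inj_onD[OF inj eq] by blast
    qed
    have sub: "h ` A \<subseteq> Z"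
    proof
      fix u assume "u \<in> h ` A"
      then obtain y where y: "y \<in> M" "u = h y" using A by auto
      have "\<bar>glue N c F y\<bar> \<le> R" using R y(1) .
      then have "- \<lceil>R\<rceil> - 1 \<le> \<lfloor>glue N c F y\<rfloor>" "\<lfloor>glue N c F y\<rfloor> \<le> \<lceil>R\<rceil> + 1" by linarith+
      moreover have "bidx N c y < N" using bidx_bounds(1)[OF p] y(1) M by auto
      ultimately show "u \<in> Z" unfolding Z_def y(2) h_def by simp
    qed
    have "finite Z" unfolding Z_def by simp
    then show ?thesis using finite_imageD[OF finite_subset[OF sub] inj_h] card_inj_on_le[OF inj_h sub] by simp
  qed
  then show ?thesis by blast
qed

lemma transfer_op_one_bounded:
  assumes "0 < \<gamma>" "\<And>y. y \<in> M \<Longrightarrow> \<gamma> \<le> \<bar>T' y\<bar>" "\<And>x. card {y\<in>M. T y = x} \<le> B"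
  shows "bounded (transfer_op M T T' (\<lambda>_. 1) ` M)"
proof -
  have "\<bar>transfer_op M T T' (\<lambda>_. 1) x\<bar> \<le> real B / \<gamma>" for x
  proof -
    have "0 \<le> transfer_op M T T' (\<lambda>_. 1) x"
      unfolding transfer_op_def by (intro sum_nonneg) simp
    moreover have "transfer_op M T T' (\<lambda>_. 1) x \<le> real (card {y\<in>M. T y = x}) * (1 / \<gamma>)"
      unfolding transfer_op_def
    proof (rule sum_bounded_above)
      fix y assume "y \<in> {y\<in>M. T y = x}"
      then show "1 / \<bar>T' y\<bar> \<le> 1 / \<gamma>" using assms(1,2) by (intro frac_le) auto
    qed
    moreover have "real (card {y\<in>M. T y = x}) * (1 / \<gamma>) \<le> real B / \<gamma>"
      using assms(1) assms(3)[of x] by (simp add: divide_right_mono)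
    ultimately show ?thesis by linarith
  qed
  then show ?thesis unfolding bounded_iff by (intro exI[of _ "real B / \<gamma>"]) simp
qed

lemma glue_transfer_op_one_bounded:
  assumes p: "partition_of N c a b" and M: "{a..<b} \<subseteq> M" "M \<subseteq> {a..b}"
    and C2: "branches_C2 N c F F' F''"
    and expand: "0 < \<gamma>" "\<forall>y\<in>M. \<gamma> \<le> \<bar>glue N c F' y\<bar>"
  shows "bounded (transfer_op M (\<lambda>y. projM circ (glue N c F y)) (glue N c F') (\<lambda>_. 1) ` M)"
proof -
  have "\<forall>y\<in>M. glue N c F' y \<noteq> 0" using expand by force
  then obtain B where "\<And>x. card {y\<in>M. projM circ (glue N c F y) = x} \<le> B"
    using glue_fibres_finite_card_le[OF p M(2) branches_C2_continuous(1)[OF C2]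
        branches_C2_inj_on[OF p M(1) C2]] by blast
  then show ?thesis using expand by (intro transfer_op_one_bounded[OF expand(1)]) auto
qed

section \<open>Perturbation of transfer operators\<close>

lemma perturbation_constant_le:
  fixes E q e \<gamma> G0 G1 L :: real
  assumes "0 \<le> E" "0 \<le> q * \<bar>e\<bar>" "0 < \<gamma>" "0 \<le> G0" "0 \<le> G1" "0 \<le> L"
  shows "E * (q * \<bar>e\<bar> * (G1 + G0 * (L + 1) / \<gamma>))
           \<le> \<bar>e\<bar> * (E * q * (1 + 1 / \<gamma> + 1 / \<gamma> * L)) * (G0 + G1)"
proof -
  have "(1 + 1 / \<gamma> + 1 / \<gamma> * L) * (G0 + G1) = (G1 + G0 * (L + 1) / \<gamma>) + (G0 + G1 * (L + 1) / \<gamma>)"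
    using assms(3) by (simp add: field_simps)
  moreover have "0 \<le> G0 + G1 * (L + 1) / \<gamma>" using assms(3-6) by simp
  ultimately have factor: "G1 + G0 * (L + 1) / \<gamma> \<le> (1 + 1 / \<gamma> + 1 / \<gamma> * L) * (G0 + G1)"
    by linarith
  have "E * (q * \<bar>e\<bar> * (G1 + G0 * (L + 1) / \<gamma>)) = (E * (q * \<bar>e\<bar>)) * (G1 + G0 * (L + 1) / \<gamma>)"
    by (simp only: mult.assoc)
  also have "\<dots> \<le> (E * (q * \<bar>e\<bar>)) * ((1 + 1 / \<gamma> + 1 / \<gamma> * L) * (G0 + G1))"
    using factor assms(1,2) by (intro mult_left_mono) simp_all
  also have "\<dots> = \<bar>e\<bar> * (E * q * (1 + 1 / \<gamma> + 1 / \<gamma> * L)) * (G0 + G1)"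
    by (simp only: mult_ac)
  finally show ?thesis .
qed

lemma divide_diff_divide_le:
  fixes u v A B \<gamma> G0 G1 D d :: real
  assumes "0 < \<gamma>" "\<gamma> \<le> A" "\<gamma> \<le> B"
    and "\<bar>u - v\<bar> \<le> G1 * d" "\<bar>v\<bar> \<le> G0" "\<bar>B - A\<bar> \<le> D * d"
    and "0 \<le> d" "0 \<le> D" "0 \<le> G0"
  shows "\<bar>u / A - v / B\<bar> \<le> (1 / A) * (d * (G1 + G0 * D / \<gamma>))"
proof -
  have A: "0 < A" and B: "0 < B" using assms(1-3) by linarith+
  have "\<bar>v * (B - A) / (A * B)\<bar> = \<bar>v * (B - A)\<bar> / (A * B)" using A B by simp
  also have "\<dots> \<le> G0 * (D * d) / (A * B)"
    unfolding abs_mult using A B assms(5,6,9)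
    by (intro divide_right_mono mult_mono) auto
  also have "\<dots> \<le> G0 * (D * d) / (A * \<gamma>)"
    using A B assms(1,3,7,8,9) by (intro divide_left_mono) auto
  finally have "\<bar>v * (B - A) / (A * B)\<bar> \<le> G0 * (D * d) / (A * \<gamma>)" .
  moreover have "\<bar>(u - v) / A\<bar> \<le> G1 * d / A" using assms(4) A by (simp add: divide_right_mono)
  moreover have "u / A - v / B = (u - v) / A + v * (B - A) / (A * B)"
    using A B by (simp add: field_simps)
  then have "\<bar>u / A - v / B\<bar> \<le> \<bar>(u - v) / A\<bar> + \<bar>v * (B - A) / (A * B)\<bar>"
    by (simp only: abs_triangle_ineq)
  ultimately have "\<bar>u / A - v / B\<bar> \<le> G1 * d / A + G0 * (D * d) / (A * \<gamma>)" by linarith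
  also have "\<dots> = (1 / A) * (d * (G1 + G0 * D / \<gamma>))"
    using A assms(1) by (simp add: field_simps)
  finally show ?thesis .
qed

lemma sum_bij_betw_diff_le:
  fixes f0 f1 w :: "'a \<Rightarrow> real"
  assumes bij: "bij_betw \<sigma> A0 A1"
    and each: "\<And>y. y \<in> A0 \<Longrightarrow> \<bar>f1 (\<sigma> y) - f0 y\<bar> \<le> w (\<sigma> y) * K"
    and "(\<Sum>z\<in>A1. w z) \<le> E" "0 \<le> K"
  shows "\<bar>(\<Sum>z\<in>A1. f1 z) - (\<Sum>y\<in>A0. f0 y)\<bar> \<le> E * K"
proof -
  have "\<bar>(\<Sum>z\<in>A1. f1 z) - (\<Sum>y\<in>A0. f0 y)\<bar> = \<bar>\<Sum>y\<in>A0. f1 (\<sigma> y) - f0 y\<bar>"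
    by (simp add: sum.reindex_bij_betw[OF bij, symmetric] sum_subtractf)
  also have "\<dots> \<le> (\<Sum>y\<in>A0. w (\<sigma> y) * K)"
    using each by (intro order_trans[OF sum_abs] sum_mono)
  also have "\<dots> = (\<Sum>z\<in>A1. w z) * K"
    by (simp add: sum.reindex_bij_betw[OF bij, symmetric] sum_distrib_right)
  also have "\<dots> \<le> E * K" using assms(3,4) by (rule mult_right_mono)
  finally show ?thesis .
qed

lemma transfer_op_diff_le:
  fixes T0 T1 T0' T1' g :: "real \<Rightarrow> real"
  assumes bij: "bij_betw \<sigma> {y\<in>M. T0 y = x} {y\<in>M. T1 y = x}"
    and pair: "\<And>y. y \<in> M \<Longrightarrow> T0 y = x \<Longrightarrow>
                 \<bar>\<sigma> y - y\<bar> \<le> \<delta> \<and> \<bar>T0' (\<sigma> y) - T0' y\<bar> \<le> L * \<bar>\<sigma> y - y\<bar>"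
    and deriv_close: "\<And>z. z \<in> M \<Longrightarrow> \<bar>T1' z - T0' z\<bar> \<le> \<delta>"
    and expand: "0 < \<gamma>" "\<And>y. y \<in> M \<Longrightarrow> \<gamma> \<le> \<bar>T0' y\<bar> \<and> \<gamma> \<le> \<bar>T1' y\<bar>"
    and g: "\<And>u v. u \<in> M \<Longrightarrow> v \<in> M \<Longrightarrow> \<bar>g u - g v\<bar> \<le> G1 * \<bar>u - v\<bar>"
      "\<And>y. y \<in> M \<Longrightarrow> \<bar>g y\<bar> \<le> G0"
    and E: "transfer_op M T1 T1' (\<lambda>_. 1) x \<le> E"
    and nonneg: "0 \<le> \<delta>" "0 \<le> L" "0 \<le> G0" "0 \<le> G1"
  shows "\<bar>transfer_op M T1 T1' g x - transfer_op M T0 T0' g x\<bar> \<le> E * (\<delta> * (G1 + G0 * (L + 1) / \<gamma>))"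
  unfolding transfer_op_def
proof (rule sum_bij_betw_diff_le[OF bij])
  show "(\<Sum>z\<in>{y\<in>M. T1 y = x}. 1 / \<bar>T1' z\<bar>) \<le> E" using E unfolding transfer_op_def .
  show "0 \<le> \<delta> * (G1 + G0 * (L + 1) / \<gamma>)" using nonneg expand(1) by simp
  fix y assume "y \<in> {y\<in>M. T0 y = x}"
  then have y: "y \<in> M" "T0 y = x" and z: "\<sigma> y \<in> M"
    using bij_betwE[OF bij] by auto
  have close: "\<bar>\<sigma> y - y\<bar> \<le> \<delta>" and lip: "\<bar>T0' (\<sigma> y) - T0' y\<bar> \<le> L * \<bar>\<sigma> y - y\<bar>"
    using pair[OF y] by auto
  have "\<bar>g (\<sigma> y) - g y\<bar> \<le> G1 * \<delta>"
    using g(1)[OF z y(1)] close nonneg(4) by (meson mult_left_mono order_trans)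
  moreover have "\<bar>\<bar>T1' (\<sigma> y)\<bar> - \<bar>T0' y\<bar>\<bar> \<le> (L + 1) * \<delta>"
  proof -
    have "L * \<bar>\<sigma> y - y\<bar> \<le> L * \<delta>" using close nonneg(2) by (rule mult_left_mono)
    then show ?thesis using lip deriv_close[OF z] by (simp add: algebra_simps)
  qed
  ultimately show "\<bar>g (\<sigma> y) / \<bar>T1' (\<sigma> y)\<bar> - g y / \<bar>T0' y\<bar>\<bar>
      \<le> 1 / \<bar>T1' (\<sigma> y)\<bar> * (\<delta> * (G1 + G0 * (L + 1) / \<gamma>))"
    using expand g(2)[OF y(1)] nonneg y z
    by (intro divide_diff_divide_le[where D = "L + 1"]) (auto simp: abs_minus_commute)
qed

lemma transfer_op_glued_perturbation_le:
  fixes circ :: bool and a b :: real and N :: nat and c :: "nat \<Rightarrow> real"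
    and F0 F0' F0'' F1 F1' F1'' :: "nat \<Rightarrow> real \<Rightarrow> real"
  defines "M \<equiv> Mset circ a b"
    and "T0 \<equiv> \<lambda>y. projM circ (glue N c F0 y)" and "T1 \<equiv> \<lambda>y. projM circ (glue N c F1 y)"
    and "T0' \<equiv> glue N c F0'" and "T1' \<equiv> glue N c F1'" and "T0'' \<equiv> glue N c F0''"
  assumes ab: "a < b" "circ \<Longrightarrow> a = 0 \<and> b = 1"
    and p: "partition_of N c a b"
    and C2: "branches_C2 N c F0 F0' F0''" "branches_C2 N c F1 F1' F1''"
    and maps: "\<forall>y\<in>M. T0 y \<in> M \<and> T1 y \<in> M"
    and expand: "0 < \<gamma>" "\<forall>y\<in>M. \<gamma> \<le> \<bar>T0' y\<bar> \<and> \<gamma> \<le> \<bar>T1' y\<bar>"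
    and E: "supM M (transfer_op M T1 T1' (\<lambda>_. 1)) \<le> E"
    and close: "dC1 circ M T1 T1' T0 T0' \<le> q * \<bar>e\<bar>"
    and pairing: "\<forall>x\<in>M. \<exists>\<sigma>. bij_betw \<sigma> {y\<in>M. T0 y = x} {y\<in>M. T1 y = x} \<and>
                   (\<forall>y\<in>M. T0 y = x \<longrightarrow> bidx N c (\<sigma> y) = bidx N c y \<and> \<bar>\<sigma> y - y\<bar> \<le> q * \<bar>e\<bar>)"
    and g: "C1_fun circ a b g g'"
  shows "supM M (\<lambda>x. transfer_op M T1 T1' g x - transfer_op M T0 T0' g x)
           \<le> \<bar>e\<bar> * (E * q * (1 + 1 / \<gamma> + 1 / \<gamma> * supM M T0'')) * C1_norm M g g'"
proof -
  have Mab: "{a..<b} \<subseteq> M" "M \<subseteq> {a..b}" "convex M" "M \<noteq> {}"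
    using ab unfolding M_def Mset_def by auto
  have bnd: "bounded (T0' ` M)" "bounded (T1' ` M)" "bounded (T0'' ` M)"
    unfolding T0'_def T1'_def T0''_def using glue_bounded[OF p Mab(2)]
      branches_C2_continuous[OF C2(1)] branches_C2_continuous[OF C2(2)] by blast+
  have bnd_one: "bounded (transfer_op M T1 T1' (\<lambda>_. 1) ` M)"
    using glue_transfer_op_one_bounded[OF p Mab(1,2) C2(2) expand(1)] expand(2)
    unfolding T1_def T1'_def by blast
  have E_ge: "transfer_op M T1 T1' (\<lambda>_. 1) x \<le> E" if "x \<in> M" for x
    using abs_le_supM[OF bnd_one that] E by linarith
  have E0: "0 \<le> E" using supM_nonneg[OF bnd_one Mab(4)] E by linarith
  have "T1 ` M \<subseteq> {a..b}" "T0 ` M \<subseteq> {a..b}" using maps Mab(2) by auto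
  then have deriv_close: "\<bar>T1' z - T0' z\<bar> \<le> q * \<bar>e\<bar>" if "z \<in> M" for z
    using order_trans[OF dC1_deriv_diff_le[OF bnd(2,1) _ _ that] close] by blast
  obtain m where "m \<in> M" using Mab(4) by blast
  then have \<delta>0: "0 \<le> q * \<bar>e\<bar>" using order_trans[OF abs_ge_zero deriv_close] by blast
  define G0 G1 L where "G0 = supM M g" and "G1 = supM M g'" and "L = supM M T0''"
  have nonneg: "0 \<le> G0" "0 \<le> G1" "0 \<le> L"
    unfolding G0_def G1_def L_def
    by (intro supM_nonneg C1_fun_bounded[OF g Mab(2)] bnd(3) Mab(4))+
  have pointwise: "\<bar>transfer_op M T1 T1' g x - transfer_op M T0 T0' g x\<bar>
      \<le> E * (q * \<bar>e\<bar> * (G1 + G0 * (L + 1) / \<gamma>))" if x: "x \<in> M" for x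
  proof -
    obtain \<sigma> where "bij_betw \<sigma> {y\<in>M. T0 y = x} {y\<in>M. T1 y = x}"
      and "\<forall>y\<in>M. T0 y = x \<longrightarrow> bidx N c (\<sigma> y) = bidx N c y \<and> \<bar>\<sigma> y - y\<bar> \<le> q * \<bar>e\<bar>"
      using bspec[OF pairing x] by blast
    then show ?thesis
      using glue_deriv_lipschitz_on_branch[OF p Mab(2,3) C2(1)] expand deriv_close E_ge[OF x]
        nonneg \<delta>0 C1_fun_lipschitz[OF g Mab(2,3)] abs_le_supM[OF C1_fun_bounded(1)[OF g Mab(2)]]
      unfolding G0_def G1_def L_def T0'_def T0''_def
      by (intro transfer_op_diff_le) (auto dest: bij_betwE)
  qed
  then show ?thesis
    using perturbation_constant_le[OF E0 \<delta>0 expand(1) nonneg]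
    unfolding C1_norm_def G0_def G1_def L_def
    by (intro supM_le[OF Mab(4)]) (meson order_trans)
qed

theorem lemma30:
  fixes P :: "'w measure" and circ :: bool and a b \<alpha> \<beta> :: real
    and N :: "'w \<Rightarrow> nat" and c :: "'w \<Rightarrow> nat \<Rightarrow> real"
    and Tb dTb ddTb :: "'w \<Rightarrow> real \<Rightarrow> nat \<Rightarrow> real \<Rightarrow> real"
    and \<gamma> E q :: "'w \<Rightarrow> real"
  defines "M \<equiv> Mset circ a b"
    and "I \<equiv> {\<alpha><..<\<beta>}"
    and "T \<equiv> \<lambda>\<omega> \<epsilon> y. projM circ (glue (N \<omega>) (c \<omega>) (Tb \<omega> \<epsilon>) y)"
    and "T' \<equiv> \<lambda>\<omega> \<epsilon>. glue (N \<omega>) (c \<omega>) (dTb \<omega> \<epsilon>)"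
    and "T'' \<equiv> \<lambda>\<omega>. glue (N \<omega>) (c \<omega>) (ddTb \<omega> 0)"
  assumes "prob_space P"
    and "a < b" and "circ \<Longrightarrow> a = 0 \<and> b = 1"
    and "-1 \<le> \<alpha>" and "\<alpha> < 0" and "0 < \<beta>" and "\<beta> \<le> 1"
    and "E \<in> borel_measurable P" and "q \<in> borel_measurable P"
    and "\<forall>\<omega>\<in>space P. partition_of (N \<omega>) (c \<omega>) a b"
    and "\<forall>\<omega>\<in>space P. \<forall>\<epsilon>\<in>I. branches_C2 (N \<omega>) (c \<omega>) (Tb \<omega> \<epsilon>) (dTb \<omega> \<epsilon>) (ddTb \<omega> \<epsilon>)"
    and "\<forall>\<omega>\<in>space P. \<forall>\<epsilon>\<in>I. \<forall>y\<in>M. T \<omega> \<epsilon> y \<in> M"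
    and "\<forall>\<omega>\<in>space P. \<gamma> \<omega> > 0 \<and> (\<forall>\<epsilon>\<in>I. \<forall>y\<in>M. \<bar>T' \<omega> \<epsilon> y\<bar> \<ge> \<gamma> \<omega>)"
    and "\<forall>\<omega>\<in>space P. \<forall>\<epsilon>\<in>I. supM M (transfer_op M (T \<omega> \<epsilon>) (T' \<omega> \<epsilon>) (\<lambda>_. 1)) \<le> E \<omega>"
    and "\<forall>\<omega>\<in>space P. \<forall>\<epsilon>\<in>I. dC1 circ M (T \<omega> \<epsilon>) (T' \<omega> \<epsilon>) (T \<omega> 0) (T' \<omega> 0) \<le> q \<omega> * \<bar>\<epsilon>\<bar>"
    and "\<forall>\<omega>\<in>space P. \<forall>\<epsilon>\<in>I. \<forall>x\<in>M. \<exists>\<sigma>.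
           bij_betw \<sigma> {y\<in>M. T \<omega> 0 y = x} {y\<in>M. T \<omega> \<epsilon> y = x} \<and>
           (\<forall>y\<in>M. T \<omega> 0 y = x \<longrightarrow>
              bidx (N \<omega>) (c \<omega>) (\<sigma> y) = bidx (N \<omega>) (c \<omega>) y \<and> \<bar>\<sigma> y - y\<bar> \<le> q \<omega> * \<bar>\<epsilon>\<bar>)"
  shows "AE \<omega> in P. \<forall>g g'. C1_fun circ a b g g' \<longrightarrow>
           (\<forall>\<epsilon>\<in>I. supM M (\<lambda>x. transfer_op M (T \<omega> \<epsilon>) (T' \<omega> \<epsilon>) g x
                  - transfer_op M (T \<omega> 0) (T' \<omega> 0) g x)
              \<le> \<bar>\<epsilon>\<bar> * (E \<omega> * q \<omega> * (1 + 1 / \<gamma> \<omega> + (1 / \<gamma> \<omega>) * supM M (T'' \<omega>)))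
                  * C1_norm M g g')"
proof -
  have "0 \<in> I" using assms(10,11) unfolding I_def by simp
  then show ?thesis
    unfolding M_def T_def T'_def T''_def
    by (intro AE_I2 allI impI ballI transfer_op_glued_perturbation_le[OF assms(7,8)])
      (use assms(15-21)[unfolded M_def T_def T'_def] in blast)+
qed

end
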